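(* For every prime $p\equiv 2 \pmod 3$, \begin{align*} \sum_{k=0}^{(p+1)/3}(6k-1)(18k^2-6k+1)\frac{(-1/3)^4_k}{k!^4}\equiv0\pmod{p^4}. \end{align*}
   Context: $(x)_0=1$ and $(x)_k=x(x+1)\cdots(x+k-1)$ is the Pochhammer symbol; $(x)_k^4$ means $((x)_k)^4$. The congruence of rational numbers modulo $p^4$ means the difference, written in lowest terms, has numerator divisible by $p^4$ and denominator not divisible by $p$. *)

theory Defs
  imports Complex_Main "HOL-Computational_Algebra.Primes"
begin

definition rat_cong_zero_mod_ppow :: "rat \<Rightarrow> int \<Rightarrow> nat \<Rightarrow> bool" where
  "rat_cong_zero_mod_ppow x p e =
     (let (a, b) = quotient_of x in p ^ e dvd a \<and> \<not> p dvd b)"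

end

theory Submission
  imports Defs
begin

text \<open>Since (6m - 1)(18m^2 - 6m + 1)/81 = m^4 - (m - 1/3)^4, the k-th summand is
  u(k - 1) - u(k) with u(k) = ((2/3)_k / k!)^4, so the sum telescopes to
  -((2/3)_n / n!)^4 = -(\<Prod>i<n. 2 + 3i)^4 / (3^n n!)^4.
  For n = (p + 1)/3 the last factor of the product is 3(n - 1) + 2 = p, whereas
  3^n n! is prime to p because p \<noteq> 3 and n < p.\<close>

lemma quartic_difference:
  fixes m :: "'a::field_char_0"
  shows "(6 * m - 1) * (18 * m^2 - 6 * m + 1) / 81 = m^4 - (m - 1/3)^4"
  by (simp add: field_simps power2_eq_square power4_eq_xxxx)

lemma sum_quartic_pochhammer_telescope:
  "(\<Sum>k = 0..n.
      (6 * of_nat k - 1) * (18 * (of_nat k)^2 - 6 * of_nat k + 1)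
      * (pochhammer (-1/3 :: 'a::field_char_0) k) ^ 4 / (of_nat (fact k)) ^ 4)
   = - ((pochhammer (2/3) n)^4 / (of_nat (fact n))^4)"
proof (induction n)
  case 0
  show ?case by simp
next
  case (Suc n)
  define P where "P = pochhammer (2/3 :: 'a) n"
  define F where "F = (of_nat (fact n) :: 'a)"
  define m where "m = (of_nat (Suc n) :: 'a)"
  have "F \<noteq> 0"
    unfolding F_def by simp
  have "m \<noteq> 0"
    unfolding m_def by (rule of_nat_neq_0)
  have "- (P^4 / F^4) + (6 * m - 1) * (18 * m^2 - 6 * m + 1) * (- P / 3)^4 / (m * F)^4
      = P^4 / (m * F)^4 * ((6 * m - 1) * (18 * m^2 - 6 * m + 1) / 81 - m^4)"
    using \<open>F \<noteq> 0\<close> \<open>m \<noteq> 0\<close> by (simp add: field_simps)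
  also have "\<dots> = - ((P * (m - 1/3))^4 / (m * F)^4)"
    unfolding quartic_difference by (simp add: power_mult_distrib)
  finally have step: "- (P^4 / F^4) + (6 * m - 1) * (18 * m^2 - 6 * m + 1) * (- P / 3)^4 / (m * F)^4
      = - ((P * (m - 1/3))^4 / (m * F)^4)" .
  have "pochhammer (-1/3 :: 'a) (Suc n) = - P / 3"
    unfolding P_def by (simp add: pochhammer_rec)
  moreover have "pochhammer (2/3 :: 'a) (Suc n) = P * (m - 1/3)"
    unfolding P_def m_def by (simp add: pochhammer_Suc)
  moreover have "(of_nat (fact (Suc n)) :: 'a) = m * F"
    unfolding F_def m_def by (simp add: algebra_simps)
  ultimately show ?case
    using Suc.IH step by (simp only: sum.atLeast0_atMost_Suc P_def F_def m_def)
qed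

lemma pochhammer_of_int_divide:
  fixes a b :: int
  assumes "b \<noteq> 0"
  shows "pochhammer (of_int a / of_int b :: 'a::field_char_0) n
    = of_int (\<Prod>i<n. a + b * int i) / of_int b ^ n"
proof (induction n)
  case 0
  show ?case by simp
next
  case (Suc n)
  with assms show ?case
    by (simp add: pochhammer_Suc field_simps)
qed

lemma dvd_prod_two_add_three_mul:
  assumes "p mod 3 = 2"
  shows "int p dvd (\<Prod>i<(p + 1) div 3. 2 + 3 * int i)"
proof -
  have "3 * ((p + 1) div 3) = p + 1"
    using assms by presburger
  then show ?thesis
    by (intro dvd_prod_eqI[where a = "(p + 1) div 3 - 1"]) auto
qed

lemma prime_not_dvd_power_mult_fact:
  fixes p q n :: nat
  assumes "prime p" "\<not> p dvd q" "n < p"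
  shows "\<not> p dvd q ^ n * fact n"
  using assms by (auto simp: prime_dvd_mult_iff prime_dvd_fact_iff dest: prime_dvd_power)

lemma rat_cong_zero_mod_ppow_of_int_divide:
  fixes a b p :: int
  assumes "prime p" "p ^ e dvd a" "\<not> p dvd b"
  shows "rat_cong_zero_mod_ppow (of_int a / of_int b) p e"
proof -
  obtain a' b' where q: "quotient_of (of_int a / of_int b) = (a', b')"
    by (cases "quotient_of (of_int a / of_int b)")
  have "b \<noteq> 0"
    using assms(3) by auto
  have "b' > 0" "coprime a' b'"
    using quotient_of_denom_pos[OF q] quotient_of_coprime[OF q] by simp_all
  have "(of_int a' :: rat) * of_int b = of_int a * of_int b'"
    using quotient_of_div[OF q] \<open>b \<noteq> 0\<close> \<open>b' > 0\<close> by (simp add: field_simps)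
  then have cross: "a' * b = a * b'"
    by (metis of_int_eq_iff of_int_mult)
  have "coprime (p ^ e) b"
    using assms(1,3) by (simp add: prime_imp_coprime)
  moreover have "p ^ e dvd a' * b"
    using cross assms(2) by simp
  ultimately have "p ^ e dvd a'"
    using coprime_dvd_mult_left_iff by blast
  have "b' dvd a' * b"
    using cross by simp
  then have "b' dvd b"
    using \<open>coprime a' b'\<close> coprime_dvd_mult_right_iff coprime_commute by blast
  then have "\<not> p dvd b'"
    using assms(3) dvd_trans by blast
  with \<open>p ^ e dvd a'\<close> q show ?thesis
    unfolding rat_cong_zero_mod_ppow_def by simp
qed

theorem mainTheorem6:
  fixes p :: nat
  assumes "prime p" and "p mod 3 = 2"
  shows "rat_cong_zero_mod_ppow
           (\<Sum>k = 0..(p + 1) div 3.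
              (6 * of_nat k - 1) * (18 * (of_nat k)^2 - 6 * of_nat k + 1)
              * (pochhammer (-1/3 :: rat) k) ^ 4 / (of_nat (fact k)) ^ 4)
           (int p) 4"
proof -
  define n where "n = (p + 1) div 3"
  define A where "A = (\<Prod>i<n. 2 + 3 * int i)"
  define B where "B = (3 ^ n * fact n :: nat)"
  have "int p dvd A"
    using dvd_prod_two_add_three_mul[OF assms(2)] by (simp add: A_def n_def)
  then have numerator: "int p ^ 4 dvd - (A ^ 4)"
    by simp
  have "\<not> p dvd 3"
    using assms primes_dvd_imp_eq[of p 3] by auto
  then have "\<not> p dvd B"
    unfolding B_def using assms
    by (intro prime_not_dvd_power_mult_fact) (auto simp: n_def)
  then have denominator: "\<not> int p dvd int B ^ 4"
    using assms(1) by (metis of_nat_power int_dvd_int_iff prime_dvd_power)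
  have "- ((pochhammer (2/3) n)^4 / (of_nat (fact n))^4) = (of_int (- (A ^ 4)) / of_int (int B ^ 4) :: rat)"
    using pochhammer_of_int_divide[of 3 2 n, where ?'a = rat]
    by (simp add: A_def B_def power_mult_distrib power_divide)
  moreover have "rat_cong_zero_mod_ppow (of_int (- (A ^ 4)) / of_int (int B ^ 4)) (int p) 4"
    using assms(1) numerator denominator by (intro rat_cong_zero_mod_ppow_of_int_divide) simp_all
  ultimately show ?thesis
    by (simp only: sum_quartic_pochhammer_telescope n_def)
qed

end
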